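(* For any $\alpha>0$, $\nu>-1$ and $x>0$, $$0<\frac{L_{\nu+1}^{\alpha-1}(-x)}{L_{\nu}^{\alpha}(-x)}<\frac{\alpha+x+\sqrt{(\alpha+x)^2+4(\nu+1)x}}{2(\nu+1)} .$$
   Context: $L_\nu^\alpha$ denotes the Laguerre function $L_\nu^\alpha(x)=\dfrac{\Gamma(\nu+\alpha+1)}{\Gamma(\nu+1)\Gamma(\alpha+1)}\,{}_1F_1(-\nu;\alpha+1;x)$, which reduces to the generalized Laguerre polynomial when $\nu$ is a nonnegative integer. *)

theory Defs
  imports "HOL-Analysis.Analysis"
begin

definition hyp1F1 :: "real \<Rightarrow> real \<Rightarrow> real \<Rightarrow> real" where
  "hyp1F1 a b x = (\<Sum>k. pochhammer a k / pochhammer b k * x ^ k / fact k)"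

definition laguerreL :: "real \<Rightarrow> real \<Rightarrow> real \<Rightarrow> real" where
  "laguerreL \<nu> \<alpha> x =
     Gamma (\<nu> + \<alpha> + 1) / (Gamma (\<nu> + 1) * Gamma (\<alpha> + 1)) * hyp1F1 (- \<nu>) (\<alpha> + 1) x"

end

theory Submission
  imports Defs
begin

text \<open>
  Kummer's transformation turns both Laguerre functions at \<open>-x\<close> into \<open>e\<^sup>-\<^sup>x\<close> times a series
  \<open>\<^sub>1F\<^sub>1(c; b; x)\<close> with \<open>c = \<alpha> + \<nu> + 1 > 0\<close>, whose terms are positive weights \<open>w\<^sub>k\<close>. The contiguous
  relation \<open>\<alpha> \<^sub>1F\<^sub>1(c; \<alpha>; x) = \<alpha> \<^sub>1F\<^sub>1(c; \<alpha> + 1; x) + \<Sum> k w\<^sub>k\<close> (weights of \<open>\<^sub>1F\<^sub>1(c; \<alpha> + 1; x)\<close>)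
  shows that the ratio equals \<open>(\<alpha> + s)/(\<nu> + 1)\<close>, where \<open>s\<close> is the mean of \<open>k\<close> under the weights;
  this gives positivity. The term recurrence of \<open>\<^sub>1F\<^sub>1\<close> expresses the second moment through the
  first and zeroth, and since the variance is positive, \<open>s\<^sup>2 + (\<alpha> - x) s < c x\<close>. Hence \<open>s\<close> lies
  below the positive root of this quadratic, which is the claimed bound.
\<close>

definition hyp1F1_term :: "real \<Rightarrow> real \<Rightarrow> real \<Rightarrow> nat \<Rightarrow> real" where
  "hyp1F1_term a b x k = pochhammer a k / pochhammer b k * x ^ k / fact k"

lemma hyp1F1_eq_suminf_term: "hyp1F1 a b x = (\<Sum>k. hyp1F1_term a b x k)"
  by (simp add: hyp1F1_def hyp1F1_term_def)

lemma hyp1F1_term_pos: "a > 0 \<Longrightarrow> b > 0 \<Longrightarrow> x > 0 \<Longrightarrow> hyp1F1_term a b x k > 0"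
  by (simp add: hyp1F1_term_def pochhammer_pos)

lemma hyp1F1_term_Suc:
  assumes "b > 0"
  shows "hyp1F1_term a b x (Suc k) = hyp1F1_term a b x k * ((a + k) / (b + k) * x / (k + 1))"
proof -
  have "pochhammer b k > 0" "b + k > 0" using assms by (simp_all add: pochhammer_pos)
  then show ?thesis
    unfolding hyp1F1_term_def by (simp add: pochhammer_Suc fact_Suc field_simps)
qed

lemma hyp1F1_term_ratio_bound:
  assumes "b > 0"
  shows "norm (hyp1F1_term a b x (Suc k)) \<le> norm (hyp1F1_term a b x k) * ((\<bar>a\<bar> / b + 1) * \<bar>x\<bar> / (k + 1))"
proof -
  have bk: "b + k > 0" using assms by simp
  have "\<bar>a + k\<bar> / (b + k) \<le> (\<bar>a\<bar> + (b + k)) / (b + k)"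
    using assms abs_triangle_ineq[of a "real k"] by (intro divide_right_mono) simp_all
  also have "\<dots> = \<bar>a\<bar> / (b + k) + 1"
    using bk by (simp add: field_simps)
  also have "\<bar>a\<bar> / (b + k) \<le> \<bar>a\<bar> / b"
    using assms by (simp add: divide_left_mono)
  finally have "\<bar>a + k\<bar> / (b + k) * \<bar>x\<bar> / (k + 1) \<le> (\<bar>a\<bar> / b + 1) * \<bar>x\<bar> / (k + 1)"
    by (intro divide_right_mono mult_right_mono) simp_all
  moreover have "\<bar>(a + k) / (b + k) * x / (k + 1)\<bar> = \<bar>a + k\<bar> / (b + k) * \<bar>x\<bar> / (k + 1)"
    using bk by (simp add: abs_mult abs_divide)
  ultimately have "\<bar>(a + k) / (b + k) * x / (k + 1)\<bar> \<le> (\<bar>a\<bar> / b + 1) * \<bar>x\<bar> / (k + 1)"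
    by simp
  then show ?thesis
    unfolding hyp1F1_term_Suc[OF assms] real_norm_def abs_mult[of "hyp1F1_term a b x k"] by (rule mult_left_mono) simp
qed

lemma summable_hyp1F1_term_weighted:
  assumes "b > 0"
  shows "summable (\<lambda>k. (real k + 1) ^ m * norm (hyp1F1_term a b x k))"
proof (rule summable_ratio_test[where c = "1/2" and N = "nat \<lceil>2 ^ Suc m * (\<bar>a\<bar> / b + 1) * \<bar>x\<bar>\<rceil>"])
  fix n assume n: "n \<ge> nat \<lceil>2 ^ Suc m * (\<bar>a\<bar> / b + 1) * \<bar>x\<bar>\<rceil>"
  define K where "K = \<bar>a\<bar> / b + 1"
  define t where "t = norm (hyp1F1_term a b x n)"
  have K: "2 ^ Suc m * K * \<bar>x\<bar> \<le> real n + 1" using n unfolding K_def by linarith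
  have "(real (Suc n) + 1) ^ m \<le> (2 * (real n + 1)) ^ m"
    by (rule power_mono) simp_all
  also have "\<dots> = 2 ^ m * (real n + 1) ^ m"
    by (rule power_mult_distrib)
  finally have "(real (Suc n) + 1) ^ m * norm (hyp1F1_term a b x (Suc n))
      \<le> 2 ^ m * (real n + 1) ^ m * (t * (K * \<bar>x\<bar> / (n + 1)))"
    unfolding t_def K_def using hyp1F1_term_ratio_bound[OF assms]
    by (intro mult_mono) simp_all
  also have "\<dots> = (real n + 1) ^ m * t * (2 ^ Suc m * K * \<bar>x\<bar> / (n + 1)) / 2"
    by (simp add: field_simps)
  also have "\<dots> \<le> (real n + 1) ^ m * t * 1 / 2"
    using K by (intro divide_right_mono mult_left_mono) (simp_all add: t_def)
  finally show "norm ((real (Suc n) + 1) ^ m * norm (hyp1F1_term a b x (Suc n)))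
      \<le> 1/2 * norm ((real n + 1) ^ m * norm (hyp1F1_term a b x n))"
    by (simp add: t_def)
qed simp

lemma summable_hyp1F1_term_norm: "b > 0 \<Longrightarrow> summable (\<lambda>k. norm (hyp1F1_term a b x k))"
  using summable_hyp1F1_term_weighted[of b 0] by simp

lemma summable_hyp1F1_term_moment:
  assumes "b > 0"
  shows "summable (\<lambda>k. real k ^ m * hyp1F1_term a b x k)"
proof (rule summable_comparison_test'[OF summable_hyp1F1_term_weighted[OF assms, of m]])
  fix k
  have "real k ^ m \<le> (real k + 1) ^ m" by (rule power_mono) simp_all
  then show "norm (real k ^ m * hyp1F1_term a b x k) \<le> (real k + 1) ^ m * norm (hyp1F1_term a b x k)"
    by (simp add: abs_mult mult_right_mono)
qed

lemma sum_binomial_Suc: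
  fixes t :: "nat \<Rightarrow> 'a::comm_semiring_1"
  shows "(\<Sum>k\<le>Suc n. of_nat (Suc n choose k) * t k) = (\<Sum>k\<le>n. of_nat (n choose k) * (t k + t (Suc k)))"
proof -
  have "(\<Sum>k\<le>Suc n. of_nat (Suc n choose k) * t k)
      = t 0 + (\<Sum>k\<le>n. of_nat (n choose Suc k) * t (Suc k)) + (\<Sum>k\<le>n. of_nat (n choose k) * t (Suc k))"
    by (subst sum.atMost_Suc_shift) (simp add: sum.distrib algebra_simps)
  also have "t 0 + (\<Sum>k\<le>n. of_nat (n choose Suc k) * t (Suc k)) = (\<Sum>k\<le>Suc n. of_nat (n choose k) * t k)"
    by (subst sum.atMost_Suc_shift) simp
  also have "\<dots> = (\<Sum>k\<le>n. of_nat (n choose k) * t k)"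
    by (simp add: binomial_eq_0)
  finally show ?thesis
    by (simp add: sum.distrib algebra_simps)
qed

lemma alternating_binomial_pochhammer_sum:
  assumes "b > 0"
  shows "(\<Sum>k\<le>n. real (n choose k) * ((-1) ^ k * pochhammer a k / pochhammer b k))
       = pochhammer (b - a) n / pochhammer b n"
  using assms
proof (induction n arbitrary: a b)
  case 0
  then show ?case by simp
next
  case (Suc n)
  define t where "t a b k = (-1) ^ k * pochhammer a k / pochhammer b k" for a b :: real and k
  have t_Suc: "t a b (Suc k) = - (a / b) * t (a + 1) (b + 1) k" for a b k
    by (simp add: t_def pochhammer_rec field_simps)
  have "(\<Sum>k\<le>Suc n. real (Suc n choose k) * t a b k)
      = (\<Sum>k\<le>n. real (n choose k) * t a b k) - a / b * (\<Sum>k\<le>n. real (n choose k) * t (a + 1) (b + 1) k)"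
    unfolding sum_binomial_Suc by (simp add: t_Suc sum_subtractf sum_distrib_left algebra_simps)
  also have "\<dots> = pochhammer (b - a) n / pochhammer b n - a / b * (pochhammer (b - a) n / pochhammer (b + 1) n)"
    using Suc.IH[of b a] Suc.IH[of "b + 1" "a + 1"] Suc.prems by (simp add: t_def)
  also have "\<dots> = pochhammer (b - a) (Suc n) / pochhammer b (Suc n)"
  proof -
    have pos: "pochhammer b n > 0" "b + n > 0" using Suc.prems by (simp_all add: pochhammer_pos)
    have "b * pochhammer (b + 1) n = pochhammer b n * (b + n)"
      by (metis pochhammer_Suc pochhammer_rec)
    then have "pochhammer (b - a) n / pochhammer b n - a / b * (pochhammer (b - a) n / pochhammer (b + 1) n)
        = pochhammer (b - a) n * (b + n - a) / (pochhammer b n * (b + n))"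
      using pos Suc.prems by (simp add: diff_divide_distrib right_diff_distrib)
    then show ?thesis
      by (simp add: pochhammer_Suc algebra_simps)
  qed
  finally show ?case
    by (simp add: t_def)
qed

lemma kummer_transformation:
  assumes "b > 0"
  shows "hyp1F1 a b x = exp x * hyp1F1 (b - a) b (- x)"
proof -
  define e where "e = (\<lambda>n. x ^ n / fact n)"
  have "e sums exp x"
    using exp_converges[of x] by (simp add: e_def divide_inverse mult.commute)
  moreover have "summable (\<lambda>n. norm (e n))"
    using summable_norm_exp[of x] by (simp add: e_def divide_inverse mult.commute)
  ultimately have "(\<lambda>k. \<Sum>i\<le>k. hyp1F1_term (b - a) b (- x) i * e (k - i)) sums (hyp1F1 (b - a) b (- x) * exp x)"
    using Cauchy_product_sums[OF summable_hyp1F1_term_norm[OF assms]]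
    by (simp add: hyp1F1_eq_suminf_term sums_iff)
  moreover have "(\<Sum>i\<le>k. hyp1F1_term (b - a) b (- x) i * e (k - i)) = hyp1F1_term a b x k" for k
  proof -
    have "hyp1F1_term (b - a) b (- x) i * e (k - i)
        = x ^ k / fact k * (real (k choose i) * ((-1) ^ i * pochhammer (b - a) i / pochhammer b i))"
      if "i \<le> k" for i
    proof -
      have "x ^ i * x ^ (k - i) = x ^ k"
        using that by (simp flip: power_add)
      then have "(- x) ^ i * x ^ (k - i) = (-1) ^ i * x ^ k"
        by (metis power_minus mult.assoc)
      moreover have "1 / (fact i * fact (k - i)) = real (k choose i) / fact k"
        using that by (simp add: binomial_fact)
      moreover have "hyp1F1_term (b - a) b (- x) i * e (k - i)
          = pochhammer (b - a) i / pochhammer b i * ((- x) ^ i * x ^ (k - i)) * (1 / (fact i * fact (k - i)))"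
        by (simp add: hyp1F1_term_def e_def)
      ultimately show ?thesis
        by (simp add: mult_ac)
    qed
    then have "(\<Sum>i\<le>k. hyp1F1_term (b - a) b (- x) i * e (k - i))
        = x ^ k / fact k * (\<Sum>i\<le>k. real (k choose i) * ((-1) ^ i * pochhammer (b - a) i / pochhammer b i))"
      by (simp add: sum_distrib_left)
    then show ?thesis
      unfolding alternating_binomial_pochhammer_sum[OF assms] by (simp add: hyp1F1_term_def mult_ac)
  qed
  ultimately show ?thesis
    by (simp add: hyp1F1_eq_suminf_term sums_iff mult.commute)
qed

lemma sq_first_moment_lt:
  fixes w :: "nat \<Rightarrow> real"
  assumes pos: "\<And>k. w k > 0"
    and M0: "w sums M0" and M1: "(\<lambda>k. real k * w k) sums M1" and M2: "(\<lambda>k. (real k)\<^sup>2 * w k) sums M2"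
  shows "M1\<^sup>2 < M0 * M2"
proof -
  have "M0 > 0"
    using M0 pos by (metis sums_iff suminf_pos)
  define \<mu> where "\<mu> = M1 / M0"
  define g where "g = (\<lambda>k. w k * (real k - \<mu>)\<^sup>2)"
  have "(\<lambda>k. (real k)\<^sup>2 * w k - 2 * \<mu> * (real k * w k) + \<mu>\<^sup>2 * w k) sums (M2 - 2 * \<mu> * M1 + \<mu>\<^sup>2 * M0)"
    by (intro sums_add sums_diff sums_mult M0 M1 M2)
  then have g_sums: "g sums (M2 - M1\<^sup>2 / M0)"
    using \<open>M0 > 0\<close> by (simp add: g_def \<mu>_def power2_eq_square algebra_simps)
  \<comment> \<open>\<mu> differs from 0 or from 1, and that term of the variance series is positive\<close>
  obtain i where "real i \<noteq> \<mu>"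
    by (metis of_nat_0 of_nat_1 zero_neq_one)
  then have "g i > 0"
    using pos[of i] by (simp add: g_def)
  moreover have "g k \<ge> 0" for k
    using pos[of k] by (simp add: g_def)
  ultimately have "0 < M2 - M1\<^sup>2 / M0"
    using g_sums by (metis sums_iff suminf_pos2)
  then show ?thesis
    using \<open>M0 > 0\<close> by (simp add: field_simps)
qed

definition hyp1F1_moment :: "real \<Rightarrow> real \<Rightarrow> real \<Rightarrow> nat \<Rightarrow> real" where
  "hyp1F1_moment a b x m = (\<Sum>k. real k ^ m * hyp1F1_term a b x k)"

lemma hyp1F1_moment_sums:
  "b > 0 \<Longrightarrow> (\<lambda>k. real k ^ m * hyp1F1_term a b x k) sums hyp1F1_moment a b x m"
  unfolding hyp1F1_moment_def by (rule summable_sums[OF summable_hyp1F1_term_moment])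

lemma hyp1F1_moment_0: "hyp1F1_moment a b x 0 = hyp1F1 a b x"
  by (simp add: hyp1F1_moment_def hyp1F1_eq_suminf_term)

lemma hyp1F1_pos:
  assumes "a > 0" "b > 0" "x > 0"
  shows "hyp1F1 a b x > 0"
  using summable_norm_cancel[OF summable_hyp1F1_term_norm[OF assms(2)]] hyp1F1_term_pos[OF assms]
  by (simp add: hyp1F1_eq_suminf_term suminf_pos)

lemma hyp1F1_moment_nonneg:
  assumes "a > 0" "b > 0" "x > 0"
  shows "hyp1F1_moment a b x m \<ge> 0"
proof -
  have "0 \<le> real k ^ m * hyp1F1_term a b x k" for k
    using hyp1F1_term_pos[OF assms, of k] by simp
  then show ?thesis
    unfolding hyp1F1_moment_def by (intro suminf_nonneg summable_hyp1F1_term_moment assms(2))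
qed

lemma hyp1F1_contiguous:
  assumes "b > 0"
  shows "b * hyp1F1 a b x = b * hyp1F1 a (b + 1) x + hyp1F1_moment a (b + 1) x 1"
proof -
  have termwise: "b * hyp1F1_term a b x k = b * hyp1F1_term a (b + 1) x k + real k * hyp1F1_term a (b + 1) x k" for k
  proof -
    have "pochhammer b k * (b + k) = b * pochhammer (b + 1) k"
      by (metis pochhammer_Suc pochhammer_rec)
    moreover have "pochhammer b k > 0" "pochhammer (b + 1) k > 0"
      using assms by (simp_all add: pochhammer_pos)
    ultimately have "b / pochhammer b k = (b + k) / pochhammer (b + 1) k"
      by (simp add: field_simps)
    then have "b * hyp1F1_term a b x k = (b + k) * hyp1F1_term a (b + 1) x k"
      unfolding hyp1F1_term_def by (metis (no_types, lifting) times_divide_eq_left times_divide_eq_right)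
    then show ?thesis
      by (simp add: algebra_simps)
  qed
  have "(\<lambda>k. b * hyp1F1_term a b x k) sums (b * hyp1F1 a (b + 1) x + hyp1F1_moment a (b + 1) x 1)"
    unfolding termwise using hyp1F1_moment_sums[of "b + 1" 0 a x] hyp1F1_moment_sums[of "b + 1" 1 a x] assms
    by (intro sums_add sums_mult) (simp_all add: hyp1F1_moment_0)
  then show ?thesis
    using hyp1F1_moment_sums[OF assms, of 0 a x]
    by (simp add: sums_iff hyp1F1_moment_0 suminf_mult)
qed

lemma hyp1F1_moment_recurrence:
  assumes "b > 0"
  shows "hyp1F1_moment a b x 2 + (b - 1) * hyp1F1_moment a b x 1
       = x * (hyp1F1_moment a b x 1 + a * hyp1F1 a b x)"
proof -
  define w where "w = hyp1F1_term a b x"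
  define f where "f = (\<lambda>k. real k * (real k + b - 1) * w k)"
  have f_sums: "f sums (hyp1F1_moment a b x 2 + (b - 1) * hyp1F1_moment a b x 1)"
  proof -
    have "(\<lambda>k. real k ^ 2 * w k + (b - 1) * (real k ^ 1 * w k))
        sums (hyp1F1_moment a b x 2 + (b - 1) * hyp1F1_moment a b x 1)"
      unfolding w_def by (intro sums_add sums_mult hyp1F1_moment_sums assms)
    then show ?thesis
      by (simp add: f_def power2_eq_square algebra_simps)
  qed
  have f_Suc: "f (Suc k) = x * (real k * w k + a * w k)" for k
  proof -
    have "b + k > 0" using assms by simp
    have "f (Suc k) = real (k + 1) * (b + k) * w (Suc k)"
      by (simp add: f_def algebra_simps)
    also have "\<dots> = x * (a + k) * w k"
      using \<open>b + k > 0\<close> by (simp add: w_def hyp1F1_term_Suc[OF assms])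
    also have "\<dots> = x * (real k * w k + a * w k)"
      by (simp add: algebra_simps)
    finally show ?thesis .
  qed
  have "(\<lambda>k. x * (real k ^ 1 * w k + a * (real k ^ 0 * w k))) sums (x * (hyp1F1_moment a b x 1 + a * hyp1F1 a b x))"
    unfolding w_def hyp1F1_moment_0[symmetric] by (intro sums_add sums_mult hyp1F1_moment_sums assms)
  then have "(\<lambda>k. f (Suc k)) sums (x * (hyp1F1_moment a b x 1 + a * hyp1F1 a b x))"
    by (simp add: f_Suc)
  then have "f sums (x * (hyp1F1_moment a b x 1 + a * hyp1F1 a b x) + f 0)"
    by (simp only: sums_Suc_iff)
  then have "f sums (x * (hyp1F1_moment a b x 1 + a * hyp1F1 a b x))"
    by (simp add: f_def)
  then show ?thesis
    using f_sums sums_unique2 by blast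
qed

lemma hyp1F1_mean_quadratic_bound:
  fixes a b x :: real
  assumes "a > 0" "b > -1" "x > 0"
  defines "s \<equiv> hyp1F1_moment a (b + 1) x 1 / hyp1F1 a (b + 1) x"
  shows "s\<^sup>2 + (b - x) * s < a * x"
proof -
  define M where "M = hyp1F1_moment a (b + 1) x"
  have b1: "b + 1 > 0" using assms by simp
  have w: "\<And>k. hyp1F1_term a (b + 1) x k > 0"
    using hyp1F1_term_pos[OF \<open>a > 0\<close> b1 \<open>x > 0\<close>] .
  have M: "(\<lambda>k. real k ^ m * hyp1F1_term a (b + 1) x k) sums M m" for m
    unfolding M_def by (rule hyp1F1_moment_sums[OF b1])
  have var: "M 1 ^ 2 < M 0 * M 2"
    using M[of 0] M[of 1] M[of 2] by (intro sq_first_moment_lt[OF w]) simp_all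
  have "M 2 + b * M 1 = x * (M 1 + a * M 0)"
    using hyp1F1_moment_recurrence[OF b1, of a x] by (simp add: M_def hyp1F1_moment_0)
  then have "M 2 = x * (M 1 + a * M 0) - b * M 1"
    by (simp add: eq_diff_eq)
  then have "M 1 ^ 2 < M 0 * (x * (M 1 + a * M 0) - b * M 1)"
    using var by simp
  moreover have "M 0 > 0"
    using hyp1F1_pos[OF \<open>a > 0\<close> b1 \<open>x > 0\<close>] by (simp add: M_def hyp1F1_moment_0)
  ultimately show ?thesis
    unfolding s_def M_def[symmetric] hyp1F1_moment_0[symmetric]
    by (simp add: field_simps power2_eq_square)
qed

lemma laguerreL_neg_eq_hyp1F1:
  assumes "\<alpha> > -1"
  shows "laguerreL \<nu> \<alpha> (- x)
       = Gamma (\<nu> + \<alpha> + 1) / (Gamma (\<nu> + 1) * Gamma (\<alpha> + 1)) * exp (- x) * hyp1F1 (\<nu> + \<alpha> + 1) (\<alpha> + 1) x"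
proof -
  have "hyp1F1 (- \<nu>) (\<alpha> + 1) (- x) = exp (- x) * hyp1F1 (\<nu> + \<alpha> + 1) (\<alpha> + 1) x"
    using kummer_transformation[of "\<alpha> + 1" "- \<nu>" "- x"] assms by (simp add: algebra_simps)
  then show ?thesis
    by (simp add: laguerreL_def)
qed

lemma Gamma_plus1_pos: "z > 0 \<Longrightarrow> Gamma (z + 1) = z * Gamma (z :: real)"
  by (rule Gamma_plus1) (auto dest: nonpos_Ints_nonpos)

lemma laguerreL_neg_ratio:
  assumes "\<alpha> > 0" "\<nu> > -1"
  shows "laguerreL (\<nu> + 1) (\<alpha> - 1) (- x) / laguerreL \<nu> \<alpha> (- x)
       = \<alpha> * hyp1F1 (\<nu> + \<alpha> + 1) \<alpha> x / ((\<nu> + 1) * hyp1F1 (\<nu> + \<alpha> + 1) (\<alpha> + 1) x)"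
proof -
  define G where "G = Gamma (\<nu> + \<alpha> + 1) * exp (- x) / (Gamma (\<nu> + 1) * Gamma \<alpha>)"
  have "Gamma (\<nu> + \<alpha> + 1) > 0" "Gamma (\<nu> + 1) > 0" "Gamma \<alpha> > 0"
    using assms by (intro Gamma_real_pos; simp)+
  then have "G \<noteq> 0"
    by (simp add: G_def)
  have L1: "laguerreL (\<nu> + 1) (\<alpha> - 1) (- x) = G / (\<nu> + 1) * hyp1F1 (\<nu> + \<alpha> + 1) \<alpha> x"
    using laguerreL_neg_eq_hyp1F1[of "\<alpha> - 1" "\<nu> + 1" x] assms Gamma_plus1_pos[of "\<nu> + 1"]
    by (simp add: G_def algebra_simps)
  have L0: "laguerreL \<nu> \<alpha> (- x) = G / \<alpha> * hyp1F1 (\<nu> + \<alpha> + 1) (\<alpha> + 1) x"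
    using laguerreL_neg_eq_hyp1F1[of \<alpha> \<nu> x] assms Gamma_plus1_pos[of \<alpha>]
    by (simp add: G_def algebra_simps)
  have "G / n * H1 / (G / a * H0) = a * H1 / (n * H0)" if "n \<noteq> 0" "a \<noteq> 0" for n a H1 H0 :: real
    using that \<open>G \<noteq> 0\<close> by (simp add: field_simps)
  then show ?thesis
    unfolding L1 L0 using assms by simp
qed

lemma laguerreL_neg_ratio_eq_mean:
  assumes "\<alpha> > 0" "\<nu> > -1" "x > 0"
  defines "c \<equiv> \<nu> + \<alpha> + 1"
  shows "laguerreL (\<nu> + 1) (\<alpha> - 1) (- x) / laguerreL \<nu> \<alpha> (- x)
       = (\<alpha> + hyp1F1_moment c (\<alpha> + 1) x 1 / hyp1F1 c (\<alpha> + 1) x) / (\<nu> + 1)"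
proof -
  have "hyp1F1 c (\<alpha> + 1) x > 0"
    using hyp1F1_pos[of c "\<alpha> + 1" x] assms by simp
  then show ?thesis
    using laguerreL_neg_ratio[OF assms(1,2), of x] hyp1F1_contiguous[OF \<open>\<alpha> > 0\<close>, of c x]
    unfolding c_def by (simp add: field_simps)
qed

theorem theorem18:
  fixes \<alpha> \<nu> x :: real
  assumes "\<alpha> > 0" and "\<nu> > -1" and "x > 0"
  shows "0 < laguerreL (\<nu> + 1) (\<alpha> - 1) (- x) / laguerreL \<nu> \<alpha> (- x)
       \<and> laguerreL (\<nu> + 1) (\<alpha> - 1) (- x) / laguerreL \<nu> \<alpha> (- x)
         < (\<alpha> + x + sqrt ((\<alpha> + x)^2 + 4 * (\<nu> + 1) * x)) / (2 * (\<nu> + 1))"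
proof -
  define c where "c = \<nu> + \<alpha> + 1"
  define s where "s = hyp1F1_moment c (\<alpha> + 1) x 1 / hyp1F1 c (\<alpha> + 1) x"
  have "c > 0" using assms by (simp add: c_def)
  have "hyp1F1_moment c (\<alpha> + 1) x 1 \<ge> 0" "hyp1F1 c (\<alpha> + 1) x > 0"
    using \<open>c > 0\<close> assms by (intro hyp1F1_moment_nonneg hyp1F1_pos; simp)+
  then have "s \<ge> 0"
    by (simp add: s_def)
  have ratio: "laguerreL (\<nu> + 1) (\<alpha> - 1) (- x) / laguerreL \<nu> \<alpha> (- x) = (\<alpha> + s) / (\<nu> + 1)"
    using laguerreL_neg_ratio_eq_mean[OF assms] by (simp add: s_def c_def)
  have "s\<^sup>2 + (\<alpha> - x) * s < c * x"
    using hyp1F1_mean_quadratic_bound[OF \<open>c > 0\<close> _ \<open>x > 0\<close>, of \<alpha>] assms by (simp add: s_def)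
  then have "(2 * s + (\<alpha> - x))\<^sup>2 < (\<alpha> + x)\<^sup>2 + 4 * (\<nu> + 1) * x"
    by (simp add: c_def power2_eq_square algebra_simps)
  then have "2 * (\<alpha> + s) < \<alpha> + x + sqrt ((\<alpha> + x)\<^sup>2 + 4 * (\<nu> + 1) * x)"
    using real_less_rsqrt by force
  then have "2 * (\<alpha> + s) / (2 * (\<nu> + 1)) < (\<alpha> + x + sqrt ((\<alpha> + x)\<^sup>2 + 4 * (\<nu> + 1) * x)) / (2 * (\<nu> + 1))"
    using assms by (intro divide_strict_right_mono) simp_all
  moreover have "2 * (\<alpha> + s) / (2 * (\<nu> + 1)) = (\<alpha> + s) / (\<nu> + 1)"
    by (rule mult_divide_mult_cancel_left) simp
  ultimately show ?thesis
    unfolding ratio using assms \<open>s \<ge> 0\<close> by simp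
qed

end
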